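(* Let $0<\theta<1$, let $\rho,\tau$ be positive integers with $\rho\le\tau$, and let $m=2^\beta$ for some $\beta\in\mathbb{N}=\{0,1,2,\dots\}$. Then $$L_m^{\rho/\tau}(\theta)=\int_{-\infty}^{\infty}\ell_m^{\rho/\tau}(\varepsilon)\,f_\theta(\varepsilon)\,d\varepsilon = 1+\lg m+\frac{1}{2}\,\frac{\theta^{m/2}}{1-\theta^{m/2}}\left(\theta^{\frac{\rho}{2\tau}}+\theta^{-\frac{\rho}{2\tau}}\right).$$
   Context: $\lg$ denotes $\log_2$. The Laplace density with parameter $\theta\in(0,1)$ is $f_\theta(\varepsilon)=-\frac{\ln\theta}{2}\theta^{|\varepsilon|}$, $\varepsilon\in\mathbb{R}$. The generalized Rice mapping $M:\mathbb{R}\to\mathbb{Z}_{\ge0}$ is $M(\varepsilon)=\lfloor 2\varepsilon\rfloor$ if $\varepsilon\ge 0$ and $M(\varepsilon)=-\lfloor 2\varepsilon\rfloor-1$ if $\varepsilon<0$. For a positive integer $m$, the Golomb codeword of a non-negative integer $N$ consists of $j=\lfloor N/m\rfloor$ in unary ($j+1$ bits) followed by $k=N \bmod m$ in minimal binary, which uses $\lfloor\lg m\rfloor$ bits if $k<2^{\lceil\lg m\rceil}-m$ and $\lceil\lg m\rceil$ bits otherwise; let $\lambda_m(N)$ be the total number of bits. The (finest-precision) code length of a real residual $\varepsilon$ is $\ell_m(\varepsilon)=\lambda_m(M(\varepsilon))$. For positive integers $\rho\le\tau$ (precision $\rho/\tau$), the code length assigned to the real residual $\varepsilon$ at precision $\rho/\tau$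 is modeled as the finest-precision assignment shifted left by $\rho/(2\tau)$: $\ell_m^{\rho/\tau}(\varepsilon)=\ell_m(\varepsilon+\rho/(2\tau))$. $L_m^{\rho/\tau}(\theta)$ denotes the average code length under the Laplace density, as in the claim. *)

theory Defs
  imports "HOL-Analysis.Analysis"
begin

definition laplace_density :: "real \<Rightarrow> real \<Rightarrow> real" where
  "laplace_density \<theta> \<epsilon> = - ln \<theta> / 2 * \<theta> powr \<bar>\<epsilon>\<bar>"

definition rice_map :: "real \<Rightarrow> nat" where
  "rice_map \<epsilon> = (if \<epsilon> \<ge> 0 then nat \<lfloor>2 * \<epsilon>\<rfloor> else nat (- \<lfloor>2 * \<epsilon>\<rfloor> - 1))"

text \<open>Length in bits of the Golomb codeword of N with parameter m:
  unary part (N div m + 1 bits) plus minimal binary code of N mod m.\<close>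
definition golomb_len :: "nat \<Rightarrow> nat \<Rightarrow> nat" where
  "golomb_len m N =
     N div m + 1 +
     (if int (N mod m) < 2 ^ nat \<lceil>log 2 (real m)\<rceil> - int m
      then nat \<lfloor>log 2 (real m)\<rfloor> else nat \<lceil>log 2 (real m)\<rceil>)"

definition code_len :: "nat \<Rightarrow> real \<Rightarrow> nat" where
  "code_len m \<epsilon> = golomb_len m (rice_map \<epsilon>)"

definition code_len_prec :: "nat \<Rightarrow> nat \<Rightarrow> nat \<Rightarrow> real \<Rightarrow> nat" where
  "code_len_prec m \<rho> \<tau> \<epsilon> = code_len m (\<epsilon> + real \<rho> / (2 * real \<tau>))"

definition avg_code_len :: "nat \<Rightarrow> nat \<Rightarrow> nat \<Rightarrow> real \<Rightarrow> real" where
  "avg_code_len m \<rho> \<tau> \<theta> =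
     integral UNIV (\<lambda>\<epsilon>. real (code_len_prec m \<rho> \<tau> \<epsilon>) * laplace_density \<theta> \<epsilon>)"

end

theory Submission
  imports Defs
begin

text \<open>For \<open>m = 2^\<beta>\<close> the Golomb code is a Rice code, of length \<open>1 + \<beta> + \<lfloor>N / m\<rfloor>\<close>.
  The quotient \<open>\<lfloor>M(\<epsilon> + \<delta>) / m\<rfloor>\<close> counts the \<open>n \<ge> 0\<close> for which \<open>\<epsilon> + \<delta>\<close> reaches the threshold
  \<open>(n + 1) m / 2\<close> or lies strictly below its negative; by monotone convergence the expected
  length is therefore \<open>1 + \<beta>\<close> plus the sum of the Laplace tail masses
  \<open>(\<theta>^((n+1)m/2 - \<delta>) + \<theta>^((n+1)m/2 + \<delta>)) / 2\<close>, a geometric series with ratio \<open>\<theta>^(m/2)\<close>.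
  The shift \<open>\<delta> = \<rho>/(2\<tau>) \<le> 1/2 \<le> m/2\<close> keeps every threshold on its side of the origin.\<close>

lemma golomb_len_pow2: "golomb_len (2 ^ b) N = N div 2 ^ b + 1 + b"
  by (simp add: golomb_len_def log_nat_power)

lemma rice_map_div_gt_iff:
  assumes "m > 0"
  shows "n < rice_map x div m \<longleftrightarrow>
    (real n + 1) * real m / 2 \<le> x \<or> x < - ((real n + 1) * real m / 2)"
proof -
  have "n < rice_map x div m \<longleftrightarrow> (n + 1) * m \<le> rice_map x"
    using assms by (simp add: less_eq_div_iff_mult_less_eq Suc_le_eq[symmetric] mult.commute)
  also have "\<dots> \<longleftrightarrow> int ((n + 1) * m) \<le> int (rice_map x)"
    by (simp only: of_nat_le_iff)
  also have "\<dots> \<longleftrightarrow> int ((n + 1) * m) \<le> \<lfloor>2 * x\<rfloor> \<or> \<lfloor>2 * x\<rfloor> < - int ((n + 1) * m)"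
  proof -
    define k where "k = \<lfloor>2 * x\<rfloor>"
    have "0 < int ((n + 1) * m)"
      using assms by (simp only: of_nat_0_less_iff) simp
    moreover have "0 \<le> x \<longleftrightarrow> 0 \<le> k"
      by (simp add: k_def)
    ultimately show ?thesis
      unfolding rice_map_def k_def[symmetric] by auto
  qed
  also have "\<dots> \<longleftrightarrow> real ((n + 1) * m) \<le> 2 * x \<or> 2 * x < - real ((n + 1) * m)"
    by (metis le_floor_iff floor_less_iff of_int_minus of_int_of_nat_eq)
  also have "\<dots> \<longleftrightarrow> (real n + 1) * real m / 2 \<le> x \<or> x < - ((real n + 1) * real m / 2)"
    by (auto simp: field_simps)
  finally show ?thesis .
qed

lemma laplace_density_nonneg: "0 < \<theta> \<Longrightarrow> \<theta> < 1 \<Longrightarrow> 0 \<le> laplace_density \<theta> x"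
  by (simp add: laplace_density_def mult_nonpos_nonneg)

lemma laplace_density_minus: "laplace_density \<theta> (- x) = laplace_density \<theta> x"
  by (simp add: laplace_density_def)

lemma borel_measurable_laplace_density [measurable]: "laplace_density \<theta> \<in> borel_measurable borel"
  unfolding laplace_density_def by measurable

lemma nn_integral_laplace_upper_tail:
  assumes \<theta>: "0 < \<theta>" "\<theta> < 1" and "0 \<le> a"
  shows "(\<integral>\<^sup>+x. ennreal (laplace_density \<theta> x) * indicator {a..} x \<partial>lborel) = ennreal (\<theta> powr a / 2)"
proof -
  define c where "c = - ln \<theta>"
  have "c > 0"
    using \<theta> by (simp add: c_def)
  then have "((\<lambda>x. c / 2 * exp (- c * x)) has_integral c / 2 * (exp (- c * a) / c)) {a..}"
    by (intro has_integral_mult_right has_integral_exp_minus_to_infinity)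
  moreover have "c / 2 * (exp (- c * a) / c) = \<theta> powr a / 2"
    using \<open>c > 0\<close> \<theta> by (simp add: powr_def c_def)
  moreover have "c / 2 * exp (- c * x) = laplace_density \<theta> x" if "x \<in> {a..}" for x
    using \<theta> \<open>0 \<le> a\<close> that by (simp add: laplace_density_def c_def powr_def)
  ultimately have "(laplace_density \<theta> has_integral \<theta> powr a / 2) {a..}"
    by (metis (no_types, lifting) has_integral_eq)
  then show ?thesis
    using laplace_density_nonneg[OF \<theta>] by (intro nn_integral_has_integral_lebesgue')
qed

lemma nn_integral_laplace_lower_tail:
  assumes \<theta>: "0 < \<theta>" "\<theta> < 1" and "0 \<le> b"
  shows "(\<integral>\<^sup>+x. ennreal (laplace_density \<theta> x) * indicator {..< -b} x \<partial>lborel) = ennreal (\<theta> powr b / 2)"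
proof -
  have "(\<integral>\<^sup>+x. ennreal (laplace_density \<theta> x) * indicator {..< -b} x \<partial>lborel)
      = (\<integral>\<^sup>+x. ennreal (laplace_density \<theta> x) * indicator {b<..} x \<partial>lborel)"
    using nn_integral_real_affine[of "\<lambda>x. ennreal (laplace_density \<theta> x) * indicator {..< -b} x" "-1" 0]
    by (simp add: laplace_density_minus indicator_def)
  also have "\<dots> = (\<integral>\<^sup>+x. ennreal (laplace_density \<theta> x) * indicator {b..} x \<partial>lborel)"
    using AE_lborel_singleton[of b] by (intro nn_integral_cong_AE) (auto simp: indicator_def)
  also have "\<dots> = ennreal (\<theta> powr b / 2)"
    using nn_integral_laplace_upper_tail[OF assms] .
  finally show ?thesis .
qed

lemma nn_integral_laplace_density:
  assumes \<theta>: "0 < \<theta>" "\<theta> < 1"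
  shows "(\<integral>\<^sup>+x. ennreal (laplace_density \<theta> x) \<partial>lborel) = 1"
proof -
  have "(\<integral>\<^sup>+x. ennreal (laplace_density \<theta> x) \<partial>lborel)
     = (\<integral>\<^sup>+x. ennreal (laplace_density \<theta> x) * indicator {0..} x
          + ennreal (laplace_density \<theta> x) * indicator {..< -0} x \<partial>lborel)"
    by (intro nn_integral_cong) (auto simp: indicator_def)
  also have "\<dots> = ennreal (1 / 2) + ennreal (1 / 2)"
    using nn_integral_laplace_upper_tail[OF \<theta>, of 0] nn_integral_laplace_lower_tail[OF \<theta>, of 0] \<theta>
    by (simp add: nn_integral_add)
  also have "\<dots> = 1"
    by (subst ennreal_plus[symmetric]) auto
  finally show ?thesis .
qed

lemma nn_integral_laplace_two_tails:
  assumes \<theta>: "0 < \<theta>" "\<theta> < 1" and "\<bar>\<delta>\<bar> \<le> a"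
  shows "(\<integral>\<^sup>+x. ennreal (laplace_density \<theta> x) * indicator {a - \<delta>..} x \<partial>lborel)
       + (\<integral>\<^sup>+x. ennreal (laplace_density \<theta> x) * indicator {..< - (a + \<delta>)} x \<partial>lborel)
       = ennreal ((\<theta> powr \<delta> + \<theta> powr - \<delta>) / 2 * \<theta> powr a)"
proof -
  have upper: "0 \<le> a - \<delta>" and lower: "0 \<le> a + \<delta>"
    using assms(3) by auto
  have "ennreal (\<theta> powr (a - \<delta>) / 2) + ennreal (\<theta> powr (a + \<delta>) / 2)
      = ennreal (\<theta> powr (a - \<delta>) / 2 + \<theta> powr (a + \<delta>) / 2)"
    by (simp add: ennreal_plus)
  also have "\<dots> = ennreal ((\<theta> powr \<delta> + \<theta> powr - \<delta>) / 2 * \<theta> powr a)"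
    unfolding diff_conv_add_uminus powr_add by (simp add: algebra_simps add_divide_distrib)
  finally show ?thesis
    unfolding nn_integral_laplace_upper_tail[OF \<theta> upper] nn_integral_laplace_lower_tail[OF \<theta> lower] .
qed

lemma suminf_ennreal_if_less: "(\<Sum>n. if n < N then c else 0) = of_nat N * (c :: ennreal)"
  by (subst suminf_finite[of "{..<N}"]) auto

lemma ennreal_rice_map_div_eq_suminf:
  assumes "0 < m"
  shows "ennreal (real (rice_map y div m))
    = (\<Sum>n. indicator {(real n + 1) * real m / 2 ..} y + indicator {..< - ((real n + 1) * real m / 2)} y)"
proof -
  have "indicator {(real n + 1) * real m / 2 ..} y + indicator {..< - ((real n + 1) * real m / 2)} y
      = (if n < rice_map y div m then 1 else (0 :: ennreal))" for n
  proof -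
    have "0 < (real n + 1) * real m"
      using assms by simp
    then show ?thesis
      using rice_map_div_gt_iff[OF assms, of n y] by (auto simp: indicator_def)
  qed
  then show ?thesis
    by (simp add: suminf_ennreal_if_less ennreal_of_nat_eq_real_of_nat)
qed

lemma nn_integral_laplace_rice_div:
  fixes \<delta> :: real and m :: nat
  assumes \<theta>: "0 < \<theta>" "\<theta> < 1" and "0 < m" and \<delta>: "\<bar>\<delta>\<bar> \<le> real m / 2"
  defines "q \<equiv> \<theta> powr (real m / 2)"
  shows "(\<integral>\<^sup>+x. ennreal (laplace_density \<theta> x * real (rice_map (x + \<delta>) div m)) \<partial>lborel)
       = ennreal ((\<theta> powr \<delta> + \<theta> powr - \<delta>) / 2 * (q / (1 - q)))"
proof -
  define h where "h = real m / 2"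
  define p where "p = laplace_density \<theta>"
  define K where "K = (\<theta> powr \<delta> + \<theta> powr - \<delta>) / 2"
  define A where "A n = {(real n + 1) * h - \<delta> ..}" for n :: nat
  define B where "B n = {..< - ((real n + 1) * h + \<delta>)}" for n :: nat
  have [measurable]: "A n \<in> sets borel" "B n \<in> sets borel" for n
    by (simp_all add: A_def B_def)
  have p_nonneg: "0 \<le> p x" for x
    using laplace_density_nonneg[OF \<theta>] by (simp add: p_def)
  have h_le: "h \<le> (real n + 1) * h" for n :: nat
    using \<open>0 < m\<close> by (simp add: h_def distrib_right)
  have layers: "ennreal (p x * real (rice_map (x + \<delta>) div m))
      = (\<Sum>n. ennreal (p x) * indicator (A n) x + ennreal (p x) * indicator (B n) x)" for x
  proof -
    have "indicator {(real n + 1) * real m / 2 ..} (x + \<delta>) = (indicator (A n) x :: ennreal)"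
      "indicator {..< - ((real n + 1) * real m / 2)} (x + \<delta>) = (indicator (B n) x :: ennreal)" for n
      by (auto simp: A_def B_def h_def indicator_def)
    then show ?thesis
      using p_nonneg[of x] by (simp add: ennreal_mult ennreal_rice_map_div_eq_suminf[OF \<open>0 < m\<close>] flip: distrib_left)
  qed
  have tails: "(\<integral>\<^sup>+x. ennreal (p x) * indicator (A n) x \<partial>lborel)
      + (\<integral>\<^sup>+x. ennreal (p x) * indicator (B n) x \<partial>lborel) = ennreal (K * q ^ Suc n)" for n
  proof -
    have "q ^ Suc n = q powr real (Suc n)"
      by (rule powr_realpow[symmetric]) (use \<theta> in \<open>simp add: q_def\<close>)
    then have q_pow: "\<theta> powr ((real n + 1) * h) = q ^ Suc n"
      by (simp add: q_def h_def powr_powr algebra_simps)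
    have "\<bar>\<delta>\<bar> \<le> (real n + 1) * h"
      using h_le[of n] \<delta> by (simp add: h_def)
    from nn_integral_laplace_two_tails[OF \<theta> this] show ?thesis
      unfolding A_def B_def p_def K_def q_pow .
  qed
  have "0 < q" "q < 1"
    using \<theta> \<open>0 < m\<close> by (simp_all add: q_def powr01_less_one)
  have "(\<lambda>n. q ^ Suc n) sums (q * (1 / (1 - q)))"
    unfolding power_Suc using \<open>0 < q\<close> \<open>q < 1\<close> by (intro sums_mult geometric_sums) simp
  then have geometric: "(\<lambda>n. K * q ^ Suc n) sums (K * (q / (1 - q)))"
    by (intro sums_mult) simp
  have "(\<integral>\<^sup>+x. ennreal (p x * real (rice_map (x + \<delta>) div m)) \<partial>lborel)
      = (\<integral>\<^sup>+x. (\<Sum>n. ennreal (p x) * indicator (A n) x + ennreal (p x) * indicator (B n) x) \<partial>lborel)"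
    by (simp only: layers)
  also have "\<dots> = (\<Sum>n. (\<integral>\<^sup>+x. ennreal (p x) * indicator (A n) x \<partial>lborel)
      + (\<integral>\<^sup>+x. ennreal (p x) * indicator (B n) x \<partial>lborel))"
    by (simp add: p_def nn_integral_suminf nn_integral_add)
  also have "\<dots> = (\<Sum>n. ennreal (K * q ^ Suc n))"
    by (simp only: tails)
  also have "\<dots> = ennreal (K * (q / (1 - q)))"
    using \<open>0 < q\<close> by (intro suminf_ennreal_eq geometric) (simp add: K_def)
  finally show ?thesis
    by (simp add: p_def K_def)
qed

lemma has_integral_code_len_laplace:
  fixes \<delta> :: real and \<beta> :: nat
  assumes \<theta>: "0 < \<theta>" "\<theta> < 1" and \<delta>: "\<bar>\<delta>\<bar> \<le> 2 ^ \<beta> / 2"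
  defines "q \<equiv> \<theta> powr (2 ^ \<beta> / 2)"
  shows "((\<lambda>x. real (code_len (2 ^ \<beta>) (x + \<delta>)) * laplace_density \<theta> x) has_integral
      1 + real \<beta> + (\<theta> powr \<delta> + \<theta> powr - \<delta>) / 2 * (q / (1 - q))) UNIV"
proof -
  define p where "p = laplace_density \<theta>"
  define D where "D x = real (rice_map (x + \<delta>) div 2 ^ \<beta>)" for x
  define R where "R = (\<theta> powr \<delta> + \<theta> powr - \<delta>) / 2 * (q / (1 - q))"
  have [measurable]: "D \<in> borel_measurable borel"
    unfolding D_def rice_map_def by measurable
  have [measurable]: "p \<in> borel_measurable borel"
    by (simp add: p_def)
  have p_nonneg: "0 \<le> p x" for x
    using laplace_density_nonneg[OF \<theta>] by (simp add: p_def)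
  have "0 < q" "q < 1"
    using \<theta> by (simp_all add: q_def powr01_less_one)
  then have "0 \<le> R"
    by (simp add: R_def)
  have code_len: "real (code_len (2 ^ \<beta>) (x + \<delta>)) * p x = (1 + real \<beta>) * p x + p x * D x" for x
    by (simp add: code_len_def golomb_len_pow2 D_def algebra_simps)
  have "(\<integral>\<^sup>+x. ennreal ((1 + real \<beta>) * p x + p x * D x) \<partial>lborel)
      = ennreal (1 + real \<beta>) * (\<integral>\<^sup>+x. ennreal (p x) \<partial>lborel) + (\<integral>\<^sup>+x. ennreal (p x * D x) \<partial>lborel)"
  proof -
    have "ennreal ((1 + real \<beta>) * p x + p x * D x) = ennreal (1 + real \<beta>) * ennreal (p x) + ennreal (p x * D x)" for x
      using p_nonneg[of x] by (simp add: D_def ennreal_plus ennreal_mult)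
    then show ?thesis
      by (simp add: nn_integral_add nn_integral_cmult)
  qed
  also have "\<dots> = ennreal (1 + real \<beta> + R)"
    using nn_integral_laplace_density[OF \<theta>] nn_integral_laplace_rice_div[OF \<theta>, of "2 ^ \<beta>" \<delta>] \<delta> \<open>0 \<le> R\<close>
    by (simp add: p_def D_def R_def q_def ennreal_plus)
  finally have nn_integral: "(\<integral>\<^sup>+x. ennreal ((1 + real \<beta>) * p x + p x * D x) \<partial>lborel)
      = ennreal (1 + real \<beta> + R)" .
  have "((\<lambda>x. (1 + real \<beta>) * p x + p x * D x) has_integral 1 + real \<beta> + R) UNIV"
  proof (rule nn_integral_has_integral)
    show "(\<lambda>x. (1 + real \<beta>) * p x + p x * D x) \<in> borel_measurable borel"
      by measurable
    show "0 \<le> (1 + real \<beta>) * p x + p x * D x" for x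
      using p_nonneg[of x] by (simp add: D_def)
  qed (use nn_integral \<open>0 \<le> R\<close> in simp_all)
  moreover have "(\<lambda>x. real (code_len (2 ^ \<beta>) (x + \<delta>)) * laplace_density \<theta> x)
      = (\<lambda>x. (1 + real \<beta>) * p x + p x * D x)"
    using code_len by (simp add: p_def)
  ultimately show ?thesis
    by (simp add: R_def)
qed

theorem theorem1:
  fixes \<theta> :: real and \<rho> \<tau> m \<beta> :: nat
  assumes "0 < \<theta>" "\<theta> < 1"
    and "0 < \<rho>" "\<rho> \<le> \<tau>"
    and "m = 2 ^ \<beta>"
  shows "(\<lambda>\<epsilon>. real (code_len_prec m \<rho> \<tau> \<epsilon>) * laplace_density \<theta> \<epsilon>) integrable_on UNIV
    \<and> avg_code_len m \<rho> \<tau> \<theta> =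
        1 + log 2 (real m) + 1 / 2 * (\<theta> powr (real m / 2) / (1 - \<theta> powr (real m / 2)))
          * (\<theta> powr (real \<rho> / (2 * real \<tau>)) + \<theta> powr (- (real \<rho> / (2 * real \<tau>))))"
proof -
  define \<delta> where "\<delta> = real \<rho> / (2 * real \<tau>)"
  have "\<bar>\<delta>\<bar> \<le> 1 / 2"
    using assms(3,4) by (simp add: \<delta>_def divide_simps)
  also have "\<dots> \<le> 2 ^ \<beta> / 2"
    by simp
  finally have "((\<lambda>\<epsilon>. real (code_len (2 ^ \<beta>) (\<epsilon> + \<delta>)) * laplace_density \<theta> \<epsilon>) has_integral
      1 + real \<beta> + (\<theta> powr \<delta> + \<theta> powr - \<delta>) / 2 * (\<theta> powr (2 ^ \<beta> / 2) / (1 - \<theta> powr (2 ^ \<beta> / 2)))) UNIV"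
    by (rule has_integral_code_len_laplace[OF assms(1,2)])
  then have "((\<lambda>\<epsilon>. real (code_len_prec m \<rho> \<tau> \<epsilon>) * laplace_density \<theta> \<epsilon>) has_integral
      1 + log 2 (real m) + 1 / 2 * (\<theta> powr (real m / 2) / (1 - \<theta> powr (real m / 2)))
          * (\<theta> powr \<delta> + \<theta> powr - \<delta>)) UNIV"
    by (simp add: assms(5) code_len_prec_def \<delta>_def log_nat_power mult.commute)
  then show ?thesis
    unfolding avg_code_len_def \<delta>_def by (blast intro: has_integral_integrable integral_unique)
qed

end
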